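(* Let $\Gamma\subseteq\mathbf{\Phi}^{\mathbb{R}}_D$ be a weighted relational clone. Then $\mathrm{supp}(\mathrm{wPol}_{\mathbb{R}}(\Gamma))=\mathrm{Pol}(\Gamma)$.
   Context: $D$ is a fixed finite set with $|D|\ge2$; $\overline{\mathbb{R}}=\mathbb{R}\cup\{\infty\}$. An $m$-ary weighted relation is $\gamma:D^m\to\overline{\mathbb{R}}$; $\mathbf{\Phi}^{\mathbb{R}}_D$ is the set of all of them; $\mathrm{Feas}(\gamma)=\{\mathbf{x}:\gamma(\mathbf{x})<\infty\}$; $\mathrm{Opt}(\gamma)$ is the relation that is $0$ on $\{\mathbf{x}\in\mathrm{Feas}(\gamma):\gamma(\mathbf{x})\le\gamma(\mathbf{y})\ \forall\mathbf{y}\}$ and $\infty$ elsewhere. Topology: for each $m$ and $F\subseteq D^m$, the $m$-ary $\gamma$ with $\mathrm{Feas}(\gamma)=F$ are identified with $\mathbb{R}^F$ (Euclidean topology), and $\mathbf{\Phi}^{\mathbb{R}}_D$ has the disjoint union topology. $\phi_=$: binary equality ($0$ if $x=y$, else $\infty$); $\phi_\emptyset$: unary, $\infty$ everywhere. Addition: $\gamma(x_1,\dots,x_r)=\gamma_1(y_1,\dots,y_s)+\gamma_2(z_1,\dots,z_t)$ for a fixed choice of $y_i,z_j$ among the $x$'s; minimisation: $\gamma(x_1,\dots,x_r)=\min_{\mathbf{y}\in D^s}\gamma'(x_1,\dots,x_r,\mathbf{y})$. A weighted relational clone is a set $\Gamma\subseteq\mathbf{\Phi}^{\mathbb{R}}_D$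 containing $\phi_=,\phi_\emptyset$, closed under addition, minimisation, scaling by non-negative reals ($0\cdot\infty=\infty$), addition of real constants and $\mathrm{Opt}$, and topologically closed. A $k$-ary operation is $f:D^k\to D$, applied coordinatewise; $\mathbf{O}^{(k)}_D$ the set of them. $f$ is a polymorphism of $\gamma$ if $f(\mathbf{x}_1,\dots,\mathbf{x}_k)\in\mathrm{Feas}(\gamma)$ whenever all $\mathbf{x}_i\in\mathrm{Feas}(\gamma)$; $\mathrm{Pol}(\Gamma)$ is the set of common polymorphisms. $\mathbf{J}_D$ is the set of projections $e^{(k)}_i(x_1,\dots,x_k)=x_i$. A $k$-ary weighting is $\omega:\mathbf{O}^{(k)}_D\to\mathbb{R}$ with $\sum_f\omega(f)=0$ and $\omega(f)<0$ only if $f$ is a projection; $\mathrm{supp}(\omega)=\mathbf{J}_D^{(k)}\cup\{f:\omega(f)>0\}$; for a set $\Omega$ of weightings, $\mathrm{supp}(\Omega)=\mathbf{J}_D\cup\bigcup_{\omega\in\Omega}\mathrm{supp}(\omega)$. $\omega$ is a weighted polymorphism of $\gamma$ if $\mathrm{supp}(\omega)\subseteq\mathrm{Pol}(\gamma)$ and for all $\mathbf{x}_1,\dots,\mathbf{x}_k\in\mathrm{Feas}(\gamma)$, $\sum_{f\in\mathrm{supp}(\omega)}\omega(f)\gamma(f(\mathbf{x}_1,\dots,\mathbf{x}_k))\le0$; $\mathrm{wPol}_{\mathbb{R}}(\Gamma)$ is the set of weightings that are weighted polymorphisms of all $\gamma\in\Gamma$. *)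

theory Defs
  imports "HOL-Analysis.Analysis"
begin

text \<open>The finite domain D is a type 'd of class finite (with CARD('d) \<ge> 2 assumed in
the theorem). Tuples in D^m are lists of length m. Extended reals R \<union> {\<infinity>} are
represented inside ereal, with the value -\<infinity> excluded.\<close>

text \<open>An m-ary weighted relation: a pair (m, g); g is only meaningful on lists of
length m and is canonically \<infinity> elsewhere.\<close>
type_synonym 'd wrel = "nat \<times> ('d list \<Rightarrow> ereal)"

definition Phi :: "'d wrel set" where
  "Phi = {(m, g). (\<forall>x. g x \<noteq> -\<infinity>) \<and> (\<forall>x. length x \<noteq> m \<longrightarrow> g x = \<infinity>)}"

definition Feas :: "'d wrel \<Rightarrow> 'd list set" where
  "Feas \<gamma> = {x. length x = fst \<gamma> \<and> snd \<gamma> x < \<infinity>}"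

definition Opt :: "'d wrel \<Rightarrow> 'd wrel" where
  "Opt \<gamma> = (fst \<gamma>, \<lambda>x. if x \<in> Feas \<gamma> \<and> (\<forall>y. length y = fst \<gamma> \<longrightarrow> snd \<gamma> x \<le> snd \<gamma> y)
                        then 0 else \<infinity>)"

definition phi_eq :: "'d wrel" where
  "phi_eq = (2, \<lambda>x. if length x = 2 \<and> x ! 0 = x ! 1 then 0 else \<infinity>)"

definition phi_empty :: "'d wrel" where
  "phi_empty = (1, \<lambda>x. \<infinity>)"

definition wadd :: "nat \<Rightarrow> (nat \<Rightarrow> nat) \<Rightarrow> (nat \<Rightarrow> nat) \<Rightarrow> 'd wrel \<Rightarrow> 'd wrel \<Rightarrow> 'd wrel" where
  "wadd r \<sigma> \<tau> \<gamma>1 \<gamma>2 = (r, \<lambda>x. if length x = r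
       then snd \<gamma>1 (map (\<lambda>i. x ! \<sigma> i) [0..<fst \<gamma>1]) + snd \<gamma>2 (map (\<lambda>j. x ! \<tau> j) [0..<fst \<gamma>2])
       else \<infinity>)"

definition wmin :: "nat \<Rightarrow> nat \<Rightarrow> 'd wrel \<Rightarrow> 'd wrel" where
  "wmin r s \<gamma> = (r, \<lambda>x. if length x = r
       then Min ((\<lambda>y. snd \<gamma> (x @ y)) ` {y. length y = s}) else \<infinity>)"

text \<open>Scaling by a non-negative real, with the convention 0 * \<infinity> = \<infinity>.\<close>
definition wscale :: "real \<Rightarrow> 'd wrel \<Rightarrow> 'd wrel" where
  "wscale c \<gamma> = (fst \<gamma>, \<lambda>x. if snd \<gamma> x = \<infinity> then \<infinity> else ereal c * snd \<gamma> x)"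

definition wconst :: "real \<Rightarrow> 'd wrel \<Rightarrow> 'd wrel" where
  "wconst c \<gamma> = (fst \<gamma>, \<lambda>x. snd \<gamma> x + ereal c)"

text \<open>Topological closedness: for each arity m and feasibility set F, the relations
of \<Gamma> with arity m and Feas = F, viewed as points of R^F (embedded in the product
space 'd list \<Rightarrow> real by putting 0 outside F), form a closed set.\<close>
definition wcoords :: "'d list set \<Rightarrow> 'd wrel \<Rightarrow> ('d list \<Rightarrow> real)" where
  "wcoords F \<gamma> = (\<lambda>x. if x \<in> F then real_of_ereal (snd \<gamma> x) else 0)"

definition top_closed :: "'d wrel set \<Rightarrow> bool" where
  "top_closed \<Gamma> \<longleftrightarrow> (\<forall>m F. closed (wcoords F ` {\<gamma> \<in> \<Gamma>. fst \<gamma> = m \<and> Feas \<gamma> = F}))"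

definition weighted_relational_clone :: "'d wrel set \<Rightarrow> bool" where
  "weighted_relational_clone \<Gamma> \<longleftrightarrow>
     \<Gamma> \<subseteq> Phi \<and> phi_eq \<in> \<Gamma> \<and> phi_empty \<in> \<Gamma> \<and>
     (\<forall>\<gamma>1\<in>\<Gamma>. \<forall>\<gamma>2\<in>\<Gamma>. \<forall>r \<sigma> \<tau>. (\<forall>i<fst \<gamma>1. \<sigma> i < r) \<and> (\<forall>j<fst \<gamma>2. \<tau> j < r)
          \<longrightarrow> wadd r \<sigma> \<tau> \<gamma>1 \<gamma>2 \<in> \<Gamma>) \<and>
     (\<forall>\<gamma>\<in>\<Gamma>. \<forall>r s. fst \<gamma> = r + s \<longrightarrow> wmin r s \<gamma> \<in> \<Gamma>) \<and>
     (\<forall>\<gamma>\<in>\<Gamma>. \<forall>c. c \<ge> 0 \<longrightarrow> wscale c \<gamma> \<in> \<Gamma>) \<and>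
     (\<forall>\<gamma>\<in>\<Gamma>. \<forall>c. wconst c \<gamma> \<in> \<Gamma>) \<and>
     (\<forall>\<gamma>\<in>\<Gamma>. Opt \<gamma> \<in> \<Gamma>) \<and>
     top_closed \<Gamma>"

text \<open>A k-ary operation: a pair (k, f), f canonically undefined off lists of length k.\<close>
type_synonym 'd op = "nat \<times> ('d list \<Rightarrow> 'd)"

definition ops :: "nat \<Rightarrow> 'd op set" where
  "ops k = {(k, f) | f. \<forall>x. length x \<noteq> k \<longrightarrow> f x = undefined}"

definition all_ops :: "'d op set" where
  "all_ops = (\<Union>k\<in>{1..}. ops k)"

definition proj :: "nat \<Rightarrow> nat \<Rightarrow> 'd op" where
  "proj k i = (k, \<lambda>x. if length x = k then x ! i else undefined)"

definition projs :: "nat \<Rightarrow> 'd op set" where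
  "projs k = {proj k i | i. i < k}"

definition all_projs :: "'d op set" where
  "all_projs = (\<Union>k\<in>{1..}. projs k)"

definition app_op :: "'d op \<Rightarrow> nat \<Rightarrow> 'd list list \<Rightarrow> 'd list" where
  "app_op f m xs = map (\<lambda>j. snd f (map (\<lambda>x. x ! j) xs)) [0..<m]"

definition is_pol :: "'d op \<Rightarrow> 'd wrel \<Rightarrow> bool" where
  "is_pol f \<gamma> \<longleftrightarrow> (\<forall>xs. length xs = fst f \<and> set xs \<subseteq> Feas \<gamma> \<longrightarrow> app_op f (fst \<gamma>) xs \<in> Feas \<gamma>)"

definition Pol :: "'d wrel set \<Rightarrow> 'd op set" where
  "Pol \<Gamma> = {f \<in> all_ops. \<forall>\<gamma>\<in>\<Gamma>. is_pol f \<gamma>}"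

text \<open>A k-ary weighting (k \<ge> 1): a pair (k, w), w : O^(k) \<rightarrow> R (zero outside O^(k)).\<close>
type_synonym 'd weighting = "nat \<times> ('d op \<Rightarrow> real)"

definition is_weighting :: "'d weighting \<Rightarrow> bool" where
  "is_weighting \<omega> \<longleftrightarrow> fst \<omega> \<ge> 1 \<and>
     (\<forall>f. f \<notin> ops (fst \<omega>) \<longrightarrow> snd \<omega> f = 0) \<and>
     (\<Sum>f\<in>ops (fst \<omega>). snd \<omega> f) = 0 \<and>
     (\<forall>f\<in>ops (fst \<omega>). snd \<omega> f < 0 \<longrightarrow> f \<in> projs (fst \<omega>))"

definition wsupp :: "'d weighting \<Rightarrow> 'd op set" where
  "wsupp \<omega> = projs (fst \<omega>) \<union> {f \<in> ops (fst \<omega>). snd \<omega> f > 0}"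

definition supp_set :: "'d weighting set \<Rightarrow> 'd op set" where
  "supp_set \<Omega> = all_projs \<union> (\<Union>\<omega>\<in>\<Omega>. wsupp \<omega>)"

definition is_wpol :: "'d weighting \<Rightarrow> 'd wrel \<Rightarrow> bool" where
  "is_wpol \<omega> \<gamma> \<longleftrightarrow> is_weighting \<omega> \<and> (\<forall>f\<in>wsupp \<omega>. is_pol f \<gamma>) \<and>
     (\<forall>xs. length xs = fst \<omega> \<and> set xs \<subseteq> Feas \<gamma> \<longrightarrow>
        (\<Sum>f\<in>wsupp \<omega>. snd \<omega> f * real_of_ereal (snd \<gamma> (app_op f (fst \<gamma>) xs))) \<le> 0)"

definition wPol :: "'d wrel set \<Rightarrow> 'd weighting set" where
  "wPol \<Gamma> = {\<omega>. is_weighting \<omega> \<and> (\<forall>\<gamma>\<in>\<Gamma>. is_wpol \<omega> \<gamma>)}"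

end

(*
  Encode a k-ary operation by its table of values on D^k. Pulling back the relations of the
  clone along k feasible tuples and restricting to tables of polymorphisms gives a closed
  convex cone C of real vectors which contains the constants. Because the clone is closed
  under Opt, a vector of C that vanishes on the tables of the projections and is nonnegative
  elsewhere vanishes: a polymorphism applied to the rows formed by the projection tables
  produces its own table. A Farkas-type separation then yields weights that are nonpositive
  on C, nonnegative away from the projections and positive at any given non-projection
  polymorphism f; read as a weighting they form a weighted polymorphism with f in its support.
*)
theory Submission
  imports Defs
begin

section \<open>Separating a closed convex cone from an orthant\<close>

lemma continuous_on_coordinate [continuous_intros]:
  "continuous_on S (\<lambda>v :: 'i \<Rightarrow> real. v i)"
  by (rule continuous_on_subset[OF continuous_on_product_coordinates]) simp

lemma continuous_on_if_const [continuous_intros]: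
  "continuous_on S f \<Longrightarrow> continuous_on S g \<Longrightarrow> continuous_on S (\<lambda>x. if P then f x else g x)"
  by (cases P) simp_all

definition supported_box :: "'i set \<Rightarrow> real \<Rightarrow> ('i \<Rightarrow> real) set" where
  "supported_box I B = {v. (\<forall>i\<in>I. \<bar>v i\<bar> \<le> B) \<and> (\<forall>i. i \<notin> I \<longrightarrow> v i = 0)}"

lemma compact_supported_box: "compact (supported_box I B)"
proof -
  let ?S = "\<lambda>i. if i \<in> I then {-B..B} else {0::real}"
  have "compactin (product_topology (\<lambda>i. euclidean) UNIV) (PiE UNIV ?S)"
    by (subst compactin_PiE) auto
  moreover have "PiE UNIV ?S = supported_box I B"
    by (auto simp: PiE_def Pi_def supported_box_def abs_le_iff)
  ultimately show ?thesis
    by (simp add: euclidean_product_topology)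
qed

lemma supported_box_mono: "B \<le> B' \<Longrightarrow> supported_box I B \<subseteq> supported_box I B'"
  unfolding supported_box_def by force

lemma nonpos_slope_if_quadratic_minimum:
  fixes W Q :: real
  assumes "\<And>t. 0 < t \<Longrightarrow> t \<le> 1 \<Longrightarrow> 0 \<le> t\<^sup>2 * Q - 2 * t * W"
  shows "W \<le> 0"
proof (rule ccontr)
  assume "\<not> W \<le> 0"
  define t where "t = min 1 (W / (\<bar>Q\<bar> + 1))"
  have t: "0 < t" "t \<le> 1"
    using \<open>\<not> W \<le> 0\<close> by (auto simp: t_def)
  have "t * (2 * W) \<le> t * (t * Q)"
    using assms[OF t] by (simp add: power2_eq_square algebra_simps)
  then have "2 * W \<le> t * \<bar>Q\<bar>"
    using t by (smt (verit) abs_ge_self mult_le_cancel_left_pos mult_left_mono)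
  also have "\<dots> \<le> W / (\<bar>Q\<bar> + 1) * \<bar>Q\<bar>"
    by (intro mult_right_mono) (auto simp: t_def)
  also have "\<dots> < W"
    using \<open>\<not> W \<le> 0\<close> by (simp add: field_simps)
  finally show False
    using \<open>\<not> W \<le> 0\<close> by linarith
qed

lemma power2_max_0_diff_le: "(max 0 (u - s))\<^sup>2 \<le> (max 0 u - s)\<^sup>2" for u s :: real
  by (cases "u - s \<le> 0") (auto intro: power_mono)

text \<open>C is a closed convex cone meeting K = {v. v = 0 on J, v \<ge> 0 on I} only in 0. On C the
  l1-distance to K dominates the l1-norm, so the squared distance to e_a + K is coercive on C;
  the residual of its minimiser is the separating weight.\<close>
locale cone_separation =
  fixes I J :: "'i set" and a :: 'i and C :: "('i \<Rightarrow> real) set"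
  assumes finite_I: "finite I" and a_in_I: "a \<in> I" and a_notin_J: "a \<notin> J"
    and J_subset_I: "J \<subseteq> I"
    and supported: "\<And>c i. c \<in> C \<Longrightarrow> i \<notin> I \<Longrightarrow> c i = 0"
    and closed_C: "closed C"
    and add_closed: "\<And>c d. c \<in> C \<Longrightarrow> d \<in> C \<Longrightarrow> (\<lambda>i. c i + d i) \<in> C"
    and scale_closed: "\<And>c t. c \<in> C \<Longrightarrow> 0 \<le> t \<Longrightarrow> (\<lambda>i. t * c i) \<in> C"
    and zero_in_C: "(\<lambda>i. 0) \<in> C"
    and meets_K_trivially:
      "\<And>c. c \<in> C \<Longrightarrow> \<forall>j\<in>J. c j = 0 \<Longrightarrow> \<forall>i\<in>I. 0 \<le> c i \<Longrightarrow> \<forall>i\<in>I. c i = 0"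
begin

definition l1_norm :: "('i \<Rightarrow> real) \<Rightarrow> real" where
  "l1_norm v = (\<Sum>i\<in>I. \<bar>v i\<bar>)"

definition l1_dist_K :: "('i \<Rightarrow> real) \<Rightarrow> real" where
  "l1_dist_K v = (\<Sum>i\<in>I. if i \<in> J then \<bar>v i\<bar> else max 0 (- v i))"

definition sq_dist_target :: "('i \<Rightarrow> real) \<Rightarrow> real" where
  "sq_dist_target v = (\<Sum>i\<in>I. if i \<in> J then (v i)\<^sup>2 else (max 0 (of_bool (i = a) - v i))\<^sup>2)"

lemma continuous_on_l1_norm: "continuous_on S l1_norm"
  unfolding l1_norm_def by (intro continuous_intros)

lemma continuous_on_l1_dist_K: "continuous_on S l1_dist_K"
  unfolding l1_dist_K_def by (intro continuous_intros)

lemma continuous_on_sq_dist_target: "continuous_on S sq_dist_target"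
  unfolding sq_dist_target_def by (intro continuous_intros)

lemma l1_norm_nonneg: "0 \<le> l1_norm v"
  unfolding l1_norm_def by (intro sum_nonneg) auto

lemma l1_dist_K_nonneg: "0 \<le> l1_dist_K v"
  unfolding l1_dist_K_def by (intro sum_nonneg) auto

lemma l1_norm_scale: "0 \<le> t \<Longrightarrow> l1_norm (\<lambda>i. t * v i) = t * l1_norm v"
  by (simp add: l1_norm_def abs_mult sum_distrib_left)

lemma l1_dist_K_scale: "0 \<le> t \<Longrightarrow> l1_dist_K (\<lambda>i. t * v i) = t * l1_dist_K v"
  unfolding l1_dist_K_def sum_distrib_left
  by (intro sum.cong) (auto simp: abs_mult max_def mult_le_0_iff)

lemma l1_dist_K_pos: "c \<in> C \<Longrightarrow> l1_norm c \<noteq> 0 \<Longrightarrow> 0 < l1_dist_K c"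
proof (rule ccontr)
  assume c: "c \<in> C" "l1_norm c \<noteq> 0" and "\<not> 0 < l1_dist_K c"
  then have "l1_dist_K c = 0"
    using l1_dist_K_nonneg[of c] by linarith
  then have "\<forall>i\<in>I. (if i \<in> J then \<bar>c i\<bar> else max 0 (- c i)) = 0"
    unfolding l1_dist_K_def using finite_I by (subst (asm) sum_nonneg_eq_0_iff) auto
  then have "\<forall>j\<in>J. c j = 0" "\<forall>i\<in>I. 0 \<le> c i"
    using J_subset_I by (auto split: if_splits)
  then have "l1_norm c = 0"
    using meets_K_trivially[OF c(1)] by (simp add: l1_norm_def)
  with c(2) show False ..
qed

lemma in_supported_box_l1_norm: "c \<in> C \<Longrightarrow> c \<in> supported_box I (l1_norm c)"
  unfolding supported_box_def l1_norm_def
  using finite_I supported by (auto intro: member_le_sum)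

lemma l1_dist_K_bounded_below_on_unit_sphere:
  "\<exists>\<delta>>0. \<forall>c\<in>C. l1_norm c = 1 \<longrightarrow> \<delta> \<le> l1_dist_K c"
proof -
  define S where "S = C \<inter> {v. l1_norm v = 1} \<inter> supported_box I 1"
  have "closed (C \<inter> {v. l1_norm v = 1})"
    using closed_C by (intro closed_Int closed_Collect_eq continuous_on_l1_norm continuous_intros)
  then have "compact S"
    unfolding S_def by (intro closed_Int_compact compact_supported_box)
  have "C \<inter> {v. l1_norm v = 1} \<subseteq> S"
    using in_supported_box_l1_norm by (force simp: S_def)
  moreover obtain \<delta> where "\<delta> > 0" "\<forall>s\<in>S. \<delta> \<le> l1_dist_K s"
  proof (cases "S = {}")
    case False
    obtain s0 where "s0 \<in> S" "\<forall>s\<in>S. l1_dist_K s0 \<le> l1_dist_K s"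
      using continuous_attains_inf[OF \<open>compact S\<close> False continuous_on_l1_dist_K] by blast
    moreover have "0 < l1_dist_K s0"
      using \<open>s0 \<in> S\<close> by (intro l1_dist_K_pos) (auto simp: S_def)
    ultimately show ?thesis
      using that by blast
  qed (use that[of 1] in simp)
  ultimately show ?thesis
    by blast
qed

lemma l1_dist_K_dominates_l1_norm: "\<exists>\<delta>>0. \<forall>c\<in>C. \<delta> * l1_norm c \<le> l1_dist_K c"
proof -
  obtain \<delta> where "\<delta> > 0" and \<delta>: "\<And>c. c \<in> C \<Longrightarrow> l1_norm c = 1 \<Longrightarrow> \<delta> \<le> l1_dist_K c"
    using l1_dist_K_bounded_below_on_unit_sphere by blast
  have "\<delta> * l1_norm c \<le> l1_dist_K c" if "c \<in> C" for c
  proof (cases "l1_norm c = 0")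
    case True
    then show ?thesis
      using l1_dist_K_nonneg by simp
  next
    case False
    then have n: "0 < l1_norm c"
      using l1_norm_nonneg[of c] by linarith
    define c' where "c' = (\<lambda>i. (1 / l1_norm c) * c i)"
    have "c' \<in> C" "l1_norm c' = 1"
      using scale_closed[OF that, of "1 / l1_norm c"] l1_norm_scale[of "1 / l1_norm c" c] n
      by (simp_all add: c'_def)
    then have "\<delta> \<le> l1_dist_K c'"
      by (rule \<delta>)
    also have "\<dots> = l1_dist_K c / l1_norm c"
      using l1_dist_K_scale[of "1 / l1_norm c" c] n by (simp add: c'_def)
    finally show ?thesis
      using n by (simp add: field_simps)
  qed
  with \<open>\<delta> > 0\<close> show ?thesis
    by blast
qed

lemma sq_dist_target_term_le:
  "i \<in> I \<Longrightarrow> (if i \<in> J then (v i)\<^sup>2 else (max 0 (of_bool (i = a) - v i))\<^sup>2) \<le> sq_dist_target v"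
  unfolding sq_dist_target_def using finite_I by (intro member_le_sum) auto

lemma l1_dist_K_le_card_if_sq_dist_target_le_1:
  assumes "sq_dist_target v \<le> 1"
  shows "l1_dist_K v \<le> card I"
proof -
  have "(if i \<in> J then \<bar>v i\<bar> else max 0 (- v i)) \<le> 1" if "i \<in> I" for i
  proof -
    have "(if i \<in> J then (v i)\<^sup>2 else (max 0 (of_bool (i = a) - v i))\<^sup>2) \<le> 1"
      using order_trans[OF sq_dist_target_term_le[OF that] assms] .
    then have "(if i \<in> J then \<bar>v i\<bar> else \<bar>max 0 (of_bool (i = a) - v i)\<bar>) \<le> 1"
      by (cases "i \<in> J") (simp_all only: if_True if_False abs_square_le_1)
    then show ?thesis
      by (cases "i = a") (auto split: if_splits)
  qed
  then have "l1_dist_K v \<le> (\<Sum>i\<in>I. 1)"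
    unfolding l1_dist_K_def by (intro sum_mono)
  then show ?thesis
    by simp
qed

lemma sq_dist_target_sublevel_bounded:
  "\<exists>B. \<forall>c\<in>C. sq_dist_target c \<le> 1 \<longrightarrow> c \<in> supported_box I B"
proof -
  obtain \<delta> where "\<delta> > 0" and \<delta>: "\<And>c. c \<in> C \<Longrightarrow> \<delta> * l1_norm c \<le> l1_dist_K c"
    using l1_dist_K_dominates_l1_norm by blast
  have "c \<in> supported_box I (card I / \<delta>)" if "c \<in> C" "sq_dist_target c \<le> 1" for c
  proof -
    have "\<delta> * l1_norm c \<le> card I"
      using \<delta>[OF that(1)] l1_dist_K_le_card_if_sq_dist_target_le_1[OF that(2)] by linarith
    then have "l1_norm c \<le> card I / \<delta>"
      using \<open>\<delta> > 0\<close> by (simp add: field_simps)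
    then show ?thesis
      using in_supported_box_l1_norm[OF that(1)] supported_box_mono by blast
  qed
  then show ?thesis
    by blast
qed

lemma sq_dist_target_zero: "sq_dist_target (\<lambda>i. 0) = 1"
proof -
  have "sq_dist_target (\<lambda>i. 0) = (\<Sum>i\<in>I. of_bool (i = a))"
    unfolding sq_dist_target_def by (intro sum.cong) (use a_notin_J in auto)
  also have "\<dots> = 1"
    using finite_I a_in_I by simp
  finally show ?thesis .
qed

lemma sq_dist_target_attains_min: "\<exists>p\<in>C. \<forall>c\<in>C. sq_dist_target p \<le> sq_dist_target c"
proof -
  obtain B where B: "\<And>c. c \<in> C \<Longrightarrow> sq_dist_target c \<le> 1 \<Longrightarrow> c \<in> supported_box I B"
    using sq_dist_target_sublevel_bounded by blast
  have zero: "(\<lambda>i. 0) \<in> C \<inter> supported_box I B"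
    using zero_in_C B[OF zero_in_C] sq_dist_target_zero by simp
  obtain p where p: "p \<in> C \<inter> supported_box I B"
    and min: "\<And>c. c \<in> C \<inter> supported_box I B \<Longrightarrow> sq_dist_target p \<le> sq_dist_target c"
    using continuous_attains_inf[OF _ _ continuous_on_sq_dist_target, of "C \<inter> supported_box I B"]
      closed_C compact_supported_box zero by (metis closed_Int_compact empty_iff)
  have "sq_dist_target p \<le> sq_dist_target c" if "c \<in> C" for c
  proof (cases "sq_dist_target c \<le> 1")
    case True
    then show ?thesis
      using min B that by blast
  next
    case False
    then show ?thesis
      using min[OF zero] sq_dist_target_zero by linarith
  qed
  then show ?thesis
    using p by blast
qed

definition residual :: "('i \<Rightarrow> real) \<Rightarrow> 'i \<Rightarrow> real" where
  "residual p i = (if i \<in> J then - p i else max 0 (of_bool (i = a) - p i))"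

lemma sq_dist_target_eq_residual: "sq_dist_target p = (\<Sum>i\<in>I. (residual p i)\<^sup>2)"
  unfolding sq_dist_target_def residual_def by (intro sum.cong) auto

lemma sq_dist_target_shift_le:
  "sq_dist_target (\<lambda>i. p i + t * d i)
     \<le> sq_dist_target p - 2 * t * (\<Sum>i\<in>I. residual p i * d i) + t\<^sup>2 * (\<Sum>i\<in>I. (d i)\<^sup>2)"
proof -
  have "sq_dist_target (\<lambda>i. p i + t * d i) \<le> (\<Sum>i\<in>I. (residual p i - t * d i)\<^sup>2)"
    unfolding sq_dist_target_def residual_def
  proof (intro sum_mono)
    fix i
    show "(if i \<in> J then (p i + t * d i)\<^sup>2 else (max 0 (of_bool (i = a) - (p i + t * d i)))\<^sup>2)
        \<le> ((if i \<in> J then - p i else max 0 (of_bool (i = a) - p i)) - t * d i)\<^sup>2"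
      using power2_max_0_diff_le[of "of_bool (i = a) - p i" "t * d i"]
      by (auto simp: power2_eq_square algebra_simps)
  qed
  also have "\<dots> = sq_dist_target p - 2 * t * (\<Sum>i\<in>I. residual p i * d i) + t\<^sup>2 * (\<Sum>i\<in>I. (d i)\<^sup>2)"
    unfolding sq_dist_target_eq_residual
    by (simp add: power2_eq_square algebra_simps sum.distrib sum_subtractf sum_distrib_left)
  finally show ?thesis .
qed

lemma residual_variational_inequality:
  assumes min: "\<And>c. c \<in> C \<Longrightarrow> sq_dist_target p \<le> sq_dist_target c"
    and feasible: "\<And>t. 0 < t \<Longrightarrow> t \<le> 1 \<Longrightarrow> (\<lambda>i. p i + t * d i) \<in> C"
  shows "(\<Sum>i\<in>I. residual p i * d i) \<le> 0"
proof (rule nonpos_slope_if_quadratic_minimum)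
  fix t :: real
  assume "0 < t" "t \<le> 1"
  show "0 \<le> t\<^sup>2 * (\<Sum>i\<in>I. (d i)\<^sup>2) - 2 * t * (\<Sum>i\<in>I. residual p i * d i)"
    using min[OF feasible[OF \<open>0 < t\<close> \<open>t \<le> 1\<close>]] sq_dist_target_shift_le[of p t d] by linarith
qed

lemma residual_nonpos_on_C:
  assumes "p \<in> C" "\<And>c. c \<in> C \<Longrightarrow> sq_dist_target p \<le> sq_dist_target c" "c \<in> C"
  shows "(\<Sum>i\<in>I. residual p i * c i) \<le> 0"
proof (rule residual_variational_inequality[OF assms(2)])
  fix t :: real
  assume "0 < t"
  then show "(\<lambda>i. p i + t * c i) \<in> C"
    using add_closed[OF assms(1) scale_closed[OF assms(3), of t]] by simp
qed

lemma residual_orthogonal: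
  assumes "p \<in> C" "\<And>c. c \<in> C \<Longrightarrow> sq_dist_target p \<le> sq_dist_target c"
  shows "(\<Sum>i\<in>I. residual p i * p i) = 0"
proof -
  have "(\<Sum>i\<in>I. residual p i * (- p i)) \<le> 0"
  proof (rule residual_variational_inequality[OF assms(2)])
    fix t :: real
    assume "t \<le> 1"
    then show "(\<lambda>i. p i + t * - p i) \<in> C"
      using scale_closed[OF assms(1), of "1 - t"] by (simp add: algebra_simps)
  qed
  with residual_nonpos_on_C[OF assms assms(1)] show ?thesis
    by (simp add: sum_negf)
qed

lemma residual_pos_at_a:
  assumes "p \<in> C" "\<And>c. c \<in> C \<Longrightarrow> sq_dist_target p \<le> sq_dist_target c"
  shows "0 < residual p a"
proof (rule ccontr)
  let ?w = "residual p"
  assume "\<not> 0 < ?w a"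
  have "(\<Sum>i\<in>I. (?w i)\<^sup>2) = (\<Sum>i\<in>I. ?w i * of_bool (i = a)) - (\<Sum>i\<in>I. ?w i * p i)"
    unfolding sum_subtractf[symmetric] residual_def
    using a_notin_J by (intro sum.cong) (auto simp: power2_eq_square max_def algebra_simps)
  also have "\<dots> = ?w a"
    using residual_orthogonal[OF assms] finite_I a_in_I
    by (simp add: of_bool_def if_distrib sum.delta cong: if_cong)
  finally have "(\<Sum>i\<in>I. (?w i)\<^sup>2) = 0"
    using \<open>\<not> 0 < ?w a\<close> sum_nonneg[of I "\<lambda>i. (?w i)\<^sup>2"] by simp
  then have "\<forall>i\<in>I. ?w i = 0"
    using finite_I by (simp add: sum_nonneg_eq_0_iff)
  then have p_J: "\<forall>j\<in>J. p j = 0" and p_ge: "\<forall>i\<in>I - J. of_bool (i = a) \<le> p i"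
    using J_subset_I by (auto simp: residual_def max_def split: if_splits)
  have "\<forall>i\<in>I. 0 \<le> p i"
  proof
    fix i
    assume "i \<in> I"
    then show "0 \<le> p i"
      using p_J p_ge[rule_format, of i] by (cases "i \<in> J"; cases "i = a") auto
  qed
  moreover have "1 \<le> p a"
    using p_ge a_in_I a_notin_J by force
  ultimately show False
    using meets_K_trivially[OF \<open>p \<in> C\<close> p_J] a_in_I by fastforce
qed

theorem separating_weight:
  "\<exists>w. (\<forall>c\<in>C. (\<Sum>i\<in>I. w i * c i) \<le> 0) \<and> 0 < w a \<and> (\<forall>i\<in>I - J. 0 \<le> w i)"
proof -
  obtain p where "p \<in> C" and "\<And>c. c \<in> C \<Longrightarrow> sq_dist_target p \<le> sq_dist_target c"
    using sq_dist_target_attains_min by blast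
  then show ?thesis
    using residual_nonpos_on_C residual_pos_at_a by (intro exI[of _ "residual p"]) (auto simp: residual_def)
qed

end

section \<open>Operations as tables\<close>

definition enum_tuples :: "nat \<Rightarrow> 'd::finite list list" where
  "enum_tuples k = (SOME l. distinct l \<and> set l = {x. length x = k})"

lemma finite_lists_of_length: "finite {x :: 'd::finite list. length x = k}"
  using finite_lists_length_eq[of "UNIV :: 'd set"] by simp

lemma enum_tuples:
  "distinct (enum_tuples k :: 'd::finite list list) \<and> set (enum_tuples k :: 'd list list) = {x. length x = k}"
proof -
  have "\<exists>l. distinct l \<and> set l = {x :: 'd list. length x = k}"
    using finite_distinct_list[OF finite_lists_of_length] by blast
  then show ?thesis
    unfolding enum_tuples_def by (rule someI_ex)
qed

lemma distinct_enum_tuples: "distinct (enum_tuples k)"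
  using enum_tuples by blast

lemma set_enum_tuples: "set (enum_tuples k :: 'd::finite list list) = {x. length x = k}"
  using enum_tuples by blast

lemma length_enum_tuples: "length (enum_tuples k :: 'd::finite list list) = CARD('d) ^ k"
proof -
  have "length (enum_tuples k :: 'd list list) = card {x :: 'd list. length x = k}"
    using distinct_card[OF distinct_enum_tuples] set_enum_tuples by metis
  then show ?thesis
    using card_lists_length_eq[of "UNIV :: 'd set" k] by simp
qed

lemma length_enum_tuples_pos: "0 < length (enum_tuples k :: 'd::finite list list)"
  by (simp add: length_enum_tuples)

lemma length_nth_enum_tuples:
  "j < length (enum_tuples k :: 'd::finite list list) \<Longrightarrow> length (enum_tuples k ! j :: 'd list) = k"
  using nth_mem set_enum_tuples by blast

definition op_table :: "nat \<Rightarrow> 'd::finite op \<Rightarrow> 'd list" where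
  "op_table k g = map (snd g) (enum_tuples k)"

lemma length_op_table [simp]: "length (op_table k (g :: 'd::finite op)) = CARD('d) ^ k"
  by (simp add: op_table_def length_enum_tuples)

definition table_rows :: "nat \<Rightarrow> 'd::finite list list" where
  "table_rows k = map (\<lambda>i. op_table k (proj k i)) [0..<k]"

lemma inj_on_op_table: "inj_on (op_table k) (ops k :: 'd::finite op set)"
proof
  fix g g' :: "'d op"
  assume "g \<in> ops k" "g' \<in> ops k" and eq: "op_table k g = op_table k g'"
  then obtain f f' where g: "g = (k, f)" "\<forall>x. length x \<noteq> k \<longrightarrow> f x = undefined"
    and g': "g' = (k, f')" "\<forall>x. length x \<noteq> k \<longrightarrow> f' x = undefined"
    unfolding ops_def by blast
  have "f x = f' x" for x
  proof (cases "length x = k")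
    case True
    then have "x \<in> set (enum_tuples k)"
      by (simp add: set_enum_tuples)
    then show ?thesis
      using eq by (simp add: op_table_def g g')
  qed (simp add: g(2) g'(2))
  then show "g = g'"
    using g g' by auto
qed

lemma op_table_surj:
  assumes "length z = CARD('d::finite) ^ k"
  shows "\<exists>g\<in>ops k. op_table k g = (z :: 'd list)"
proof
  let ?T = "enum_tuples k :: 'd list list"
  define g :: "'d op" where
    "g = (k, \<lambda>x. if length x = k then the (map_of (zip ?T z) x) else undefined)"
  show "g \<in> ops k"
    by (auto simp: g_def ops_def)
  show "op_table k g = z"
    using assms
    by (intro nth_equalityI)
      (auto simp: op_table_def g_def length_enum_tuples length_nth_enum_tuples
        map_of_zip_nth[OF _ distinct_enum_tuples])
qed

lemma finite_ops: "finite (ops k :: 'd::finite op set)"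
proof (rule finite_imageD[OF _ inj_on_op_table])
  have "op_table k ` ops k \<subseteq> {z :: 'd list. length z = CARD('d) ^ k}"
    by auto
  then show "finite (op_table k ` (ops k :: 'd op set))"
    by (rule finite_subset) (rule finite_lists_of_length)
qed

lemma proj_in_ops: "proj k i \<in> ops k"
  unfolding ops_def proj_def by auto

lemma app_op_proj: "i < length xs \<Longrightarrow> length (xs ! i) = m \<Longrightarrow> app_op (proj (length xs) i) m xs = xs ! i"
  unfolding app_op_def proj_def by (intro nth_equalityI) auto

lemma projs_subset_ops: "projs k \<subseteq> ops k"
  unfolding projs_def using proj_in_ops by blast

lemma app_op_table_rows: "app_op g (CARD('d) ^ k) (table_rows k) = op_table k (g :: 'd::finite op)"
proof -
  have "map (\<lambda>x. x ! j) (table_rows k :: 'd list list) = enum_tuples k ! j"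
    if "j < CARD('d) ^ k" for j
  proof -
    have "j < length (enum_tuples k :: 'd list list)" "length (enum_tuples k ! j :: 'd list) = k"
      using that length_nth_enum_tuples by (simp_all add: length_enum_tuples)
    then show ?thesis
      by (intro nth_equalityI) (simp_all add: table_rows_def op_table_def proj_def)
  qed
  then show ?thesis
    by (intro nth_equalityI) (simp_all add: app_op_def op_table_def length_enum_tuples)
qed

lemma set_table_rows: "set (table_rows k :: 'd::finite list list) = op_table k ` projs k"
proof -
  have "projs k = (proj k ` {0..<k} :: 'd op set)"
    by (auto simp: projs_def)
  then show ?thesis
    by (simp add: table_rows_def image_image)
qed

lemma op_table_in_proj_tables_iff:
  "g \<in> ops k \<Longrightarrow> op_table k g \<in> op_table k ` projs k \<longleftrightarrow> g \<in> projs k"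
  using inj_on_image_mem_iff[OF inj_on_op_table _ projs_subset_ops] .

lemma is_pol_proj: "i < k \<Longrightarrow> is_pol (proj k i) \<gamma>"
  unfolding is_pol_def
proof (intro allI impI)
  fix xs
  assume "i < k" "length xs = fst (proj k i) \<and> set xs \<subseteq> Feas \<gamma>"
  then have "i < length xs" "xs ! i \<in> Feas \<gamma>"
    by (auto simp: proj_def)
  then show "app_op (proj k i) (fst \<gamma>) xs \<in> Feas \<gamma>"
    using app_op_proj[of i xs "fst \<gamma>"] \<open>length xs = fst (proj k i) \<and> _\<close>
    by (simp add: Feas_def proj_def)
qed

lemma proj_in_Pol: "i < k \<Longrightarrow> proj k i \<in> Pol \<Gamma>"
  using proj_in_ops[of k i] is_pol_proj[of i k] by (auto simp: Pol_def all_ops_def)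

lemma all_projs_subset_Pol: "all_projs \<subseteq> Pol \<Gamma>"
  using proj_in_Pol by (auto simp: all_projs_def projs_def)

lemma sum_wsupp_eq_sum_ops:
  assumes "is_weighting (\<omega> :: 'd::finite weighting)"
  shows "(\<Sum>f\<in>wsupp \<omega>. snd \<omega> f * v f) = (\<Sum>f\<in>ops (fst \<omega>). snd \<omega> f * v f)"
proof (rule sum.mono_neutral_left)
  show "finite (ops (fst \<omega>) :: 'd op set)"
    by (rule finite_ops)
  show "wsupp \<omega> \<subseteq> ops (fst \<omega>)"
    using projs_subset_ops by (auto simp: wsupp_def)
  show "\<forall>f\<in>ops (fst \<omega>) - wsupp \<omega>. snd \<omega> f * v f = 0"
    using assms by (force simp: wsupp_def is_weighting_def)
qed

lemma supp_set_wPol_subset_Pol: "supp_set (wPol \<Gamma>) \<subseteq> Pol \<Gamma>"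
proof
  fix f
  assume "f \<in> supp_set (wPol \<Gamma>)"
  then consider "f \<in> all_projs" | \<omega> where "\<omega> \<in> wPol \<Gamma>" "f \<in> wsupp \<omega>"
    by (auto simp: supp_set_def)
  then show "f \<in> Pol \<Gamma>"
  proof cases
    case 1
    then show ?thesis
      using all_projs_subset_Pol by blast
  next
    case 2
    then have "is_weighting \<omega>" "\<forall>\<gamma>\<in>\<Gamma>. is_pol f \<gamma>"
      by (auto simp: wPol_def is_wpol_def)
    moreover have "f \<in> ops (fst \<omega>)"
      using 2(2) projs_subset_ops by (auto simp: wsupp_def)
    ultimately show ?thesis
      by (auto simp: Pol_def all_ops_def is_weighting_def)
  qed
qed

section \<open>Constructions in a weighted relational clone\<close>

lemma value_infinite_if_not_Feas:
  "length y = fst \<gamma> \<Longrightarrow> y \<notin> Feas \<gamma> \<Longrightarrow> snd \<gamma> y = \<infinity>"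
  unfolding Feas_def by (simp add: less_ereal.simps(5) top.not_eq_extremum)

definition wsum :: "'d wrel \<Rightarrow> 'd wrel \<Rightarrow> 'd wrel" where
  "wsum \<gamma>1 \<gamma>2 = wadd (fst \<gamma>1) (\<lambda>i. i) (\<lambda>i. i) \<gamma>1 \<gamma>2"

lemma fst_wsum [simp]: "fst (wsum \<gamma>1 \<gamma>2) = fst \<gamma>1"
  by (simp add: wsum_def wadd_def)

lemma snd_wsum:
  "fst \<gamma>2 = fst \<gamma>1 \<Longrightarrow> length x = fst \<gamma>1 \<Longrightarrow> snd (wsum \<gamma>1 \<gamma>2) x = snd \<gamma>1 x + snd \<gamma>2 x"
  using map_nth[of x] by (simp add: wsum_def wadd_def)

lemma fst_wscale [simp]: "fst (wscale c \<gamma>) = fst \<gamma>"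
  by (simp add: wscale_def)

lemma fst_wconst [simp]: "fst (wconst c \<gamma>) = fst \<gamma>"
  by (simp add: wconst_def)

lemma fst_Opt [simp]: "fst (Opt \<gamma>) = fst \<gamma>"
  by (simp add: Opt_def)

lemma Feas_Opt: "Feas (Opt \<gamma>) = {x \<in> Feas \<gamma>. \<forall>y. length y = fst \<gamma> \<longrightarrow> snd \<gamma> x \<le> snd \<gamma> y}"
  unfolding Opt_def Feas_def by auto

locale weighted_clone =
  fixes \<Gamma> :: "'d::finite wrel set"
  assumes clone: "weighted_relational_clone \<Gamma>"
begin

lemma value_neq_minf: "\<gamma> \<in> \<Gamma> \<Longrightarrow> snd \<gamma> x \<noteq> -\<infinity>"
  using clone unfolding weighted_relational_clone_def Phi_def by (cases \<gamma>) auto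

lemma Feas_value_real: "\<gamma> \<in> \<Gamma> \<Longrightarrow> x \<in> Feas \<gamma> \<Longrightarrow> snd \<gamma> x = ereal (real_of_ereal (snd \<gamma> x))"
  using value_neq_minf[of \<gamma> x] unfolding Feas_def by (cases "snd \<gamma> x") auto

lemma wadd_in: "\<gamma>1 \<in> \<Gamma> \<Longrightarrow> \<gamma>2 \<in> \<Gamma> \<Longrightarrow> \<forall>i<fst \<gamma>1. \<sigma> i < r \<Longrightarrow> \<forall>j<fst \<gamma>2. \<tau> j < r \<Longrightarrow>
    wadd r \<sigma> \<tau> \<gamma>1 \<gamma>2 \<in> \<Gamma>"
  using clone unfolding weighted_relational_clone_def by blast

lemma wscale_in: "\<gamma> \<in> \<Gamma> \<Longrightarrow> 0 \<le> c \<Longrightarrow> wscale c \<gamma> \<in> \<Gamma>"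
  using clone unfolding weighted_relational_clone_def by blast

lemma wconst_in: "\<gamma> \<in> \<Gamma> \<Longrightarrow> wconst c \<gamma> \<in> \<Gamma>"
  using clone unfolding weighted_relational_clone_def by blast

lemma Opt_in: "\<gamma> \<in> \<Gamma> \<Longrightarrow> Opt \<gamma> \<in> \<Gamma>"
  using clone unfolding weighted_relational_clone_def by blast

lemma phi_eq_in: "phi_eq \<in> \<Gamma>"
  using clone unfolding weighted_relational_clone_def by blast

lemma closed_coords: "closed (wcoords F ` {\<gamma> \<in> \<Gamma>. fst \<gamma> = m \<and> Feas \<gamma> = F})"
  using clone unfolding weighted_relational_clone_def top_closed_def by blast

lemma wsum_in: "\<gamma>1 \<in> \<Gamma> \<Longrightarrow> \<gamma>2 \<in> \<Gamma> \<Longrightarrow> fst \<gamma>2 = fst \<gamma>1 \<Longrightarrow> wsum \<gamma>1 \<gamma>2 \<in> \<Gamma>"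
  unfolding wsum_def by (rule wadd_in) auto

lemma Feas_wsum:
  assumes "\<gamma>1 \<in> \<Gamma>" "\<gamma>2 \<in> \<Gamma>" "fst \<gamma>2 = fst \<gamma>1"
  shows "Feas (wsum \<gamma>1 \<gamma>2) = Feas \<gamma>1 \<inter> Feas \<gamma>2"
proof -
  have "snd \<gamma>1 x + snd \<gamma>2 x < \<infinity> \<longleftrightarrow> snd \<gamma>1 x < \<infinity> \<and> snd \<gamma>2 x < \<infinity>" for x
    using value_neq_minf[OF assms(1), of x] value_neq_minf[OF assms(2), of x]
    by (cases "snd \<gamma>1 x"; cases "snd \<gamma>2 x") auto
  then show ?thesis
    using assms(3) by (auto simp: Feas_def snd_wsum)
qed

lemma Feas_wscale: "\<gamma> \<in> \<Gamma> \<Longrightarrow> Feas (wscale c \<gamma>) = Feas \<gamma>"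
  using value_neq_minf[of \<gamma>] unfolding Feas_def wscale_def
  by (auto simp: less_ereal.simps(5) top.not_eq_extremum ereal_mult_less_right)

lemma Feas_wconst: "\<gamma> \<in> \<Gamma> \<Longrightarrow> Feas (wconst c \<gamma>) = Feas \<gamma>"
  using value_neq_minf[of \<gamma>] unfolding Feas_def wconst_def
  by (auto simp: less_ereal.simps(5) top.not_eq_extremum)

text \<open>Adding the binary equality relation on a repeated variable turns the addition rule
  into a pure renaming of variables.\<close>
lemma minor_in:
  assumes "\<gamma> \<in> \<Gamma>" "0 < r" "\<forall>i<fst \<gamma>. \<pi> i < r"
  shows "\<exists>\<gamma>'\<in>\<Gamma>. fst \<gamma>' = r \<and>
           (\<forall>x. length x = r \<longrightarrow> snd \<gamma>' x = snd \<gamma> (map (\<lambda>i. x ! \<pi> i) [0..<fst \<gamma>]))"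
proof
  let ?\<gamma>' = "wadd r \<pi> (\<lambda>_. 0) \<gamma> phi_eq"
  show "?\<gamma>' \<in> \<Gamma>"
    using assms by (intro wadd_in phi_eq_in) auto
  show "fst ?\<gamma>' = r \<and> (\<forall>x. length x = r \<longrightarrow> snd ?\<gamma>' x = snd \<gamma> (map (\<lambda>i. x ! \<pi> i) [0..<fst \<gamma>]))"
    by (simp add: wadd_def phi_eq_def)
qed

lemma zero_relation_in:
  assumes "0 < r"
  shows "\<exists>Z\<in>\<Gamma>. fst Z = r \<and> (\<forall>x. length x = r \<longrightarrow> snd Z x = 0)"
  using minor_in[OF phi_eq_in assms, of "\<lambda>_. 0"] assms by (simp add: phi_eq_def)

lemma pullback_in:
  assumes "\<gamma> \<in> \<Gamma>" "length ys = k" "\<forall>y\<in>set ys. length y = fst \<gamma>"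
  shows "\<exists>\<gamma>'\<in>\<Gamma>. fst \<gamma>' = CARD('d) ^ k \<and>
           (\<forall>g. snd \<gamma>' (op_table k g) = snd \<gamma> (app_op g (fst \<gamma>) ys))"
proof -
  let ?T = "enum_tuples k :: 'd list list"
  have "map (\<lambda>y. y ! j) ys \<in> set ?T" for j
    using assms(2) by (simp add: set_enum_tuples)
  then have "\<forall>j. \<exists>i. i < length ?T \<and> ?T ! i = map (\<lambda>y. y ! j) ys"
    by (simp add: in_set_conv_nth)
  then obtain \<pi> where \<pi>: "\<And>j. \<pi> j < length ?T" "\<And>j. ?T ! \<pi> j = map (\<lambda>y. y ! j) ys"
    by metis
  obtain \<gamma>' where "\<gamma>' \<in> \<Gamma>" "fst \<gamma>' = length ?T"
    and \<gamma>': "\<And>x. length x = length ?T \<Longrightarrow> snd \<gamma>' x = snd \<gamma> (map (\<lambda>i. x ! \<pi> i) [0..<fst \<gamma>])"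
    using minor_in[OF assms(1), of "length ?T" \<pi>] \<pi>(1) length_enum_tuples_pos by blast
  have "snd \<gamma>' (op_table k g) = snd \<gamma> (app_op g (fst \<gamma>) ys)" for g :: "'d op"
    using \<gamma>'[of "op_table k g"] \<pi> by (simp add: op_table_def app_op_def length_enum_tuples)
  with \<open>\<gamma>' \<in> \<Gamma>\<close> \<open>fst \<gamma>' = length ?T\<close> show ?thesis
    by (auto simp: length_enum_tuples)
qed

lemma intersection_avoiding_in:
  assumes "finite A" "0 < m" "\<forall>z\<in>F. length z = m"
    and avoid: "\<And>z. z \<in> A \<Longrightarrow> \<exists>\<gamma>\<in>\<Gamma>. fst \<gamma> = m \<and> F \<subseteq> Feas \<gamma> \<and> z \<notin> Feas \<gamma>"
  shows "\<exists>\<delta>\<in>\<Gamma>. fst \<delta> = m \<and> F \<subseteq> Feas \<delta> \<and> A \<inter> Feas \<delta> = {}"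
  using assms(1) avoid
proof (induction A rule: finite_induct)
  case empty
  obtain Z where "Z \<in> \<Gamma>" "fst Z = m" "\<forall>x. length x = m \<longrightarrow> snd Z x = 0"
    using zero_relation_in[OF \<open>0 < m\<close>] by blast
  with assms(3) show ?case
    by (auto simp: Feas_def)
next
  case (insert z A)
  then obtain \<delta> where \<delta>: "\<delta> \<in> \<Gamma>" "fst \<delta> = m" "F \<subseteq> Feas \<delta>" "A \<inter> Feas \<delta> = {}"
    by blast
  obtain \<gamma> where \<gamma>: "\<gamma> \<in> \<Gamma>" "fst \<gamma> = m" "F \<subseteq> Feas \<gamma>" "z \<notin> Feas \<gamma>"
    using insert.prems by blast
  have "wsum \<delta> \<gamma> \<in> \<Gamma>" "Feas (wsum \<delta> \<gamma>) = Feas \<delta> \<inter> Feas \<gamma>"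
    using \<delta> \<gamma> by (simp_all add: wsum_in Feas_wsum)
  with \<delta> \<gamma> show ?case
    by (intro bexI[of _ "wsum \<delta> \<gamma>"]) auto
qed

definition feasible_tables :: "nat \<Rightarrow> 'd list set" where
  "feasible_tables k = op_table k ` (Pol \<Gamma> \<inter> ops k)"

lemma length_feasible_tables: "z \<in> feasible_tables k \<Longrightarrow> length z = CARD('d) ^ k"
  by (auto simp: feasible_tables_def)

lemma feasible_tables_subset_Feas_pullback:
  assumes "\<gamma> \<in> \<Gamma>" "length ys = k" "set ys \<subseteq> Feas \<gamma>"
    and "fst \<gamma>' = CARD('d) ^ k" "\<forall>g. snd \<gamma>' (op_table k g) = snd \<gamma> (app_op g (fst \<gamma>) ys)"
  shows "feasible_tables k \<subseteq> Feas \<gamma>'"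
proof
  fix z
  assume "z \<in> feasible_tables k"
  then obtain g where g: "g \<in> Pol \<Gamma>" "g \<in> ops k" and z: "z = op_table k g"
    by (auto simp: feasible_tables_def)
  have "app_op g (fst \<gamma>) ys \<in> Feas \<gamma>"
    using g assms(1-3) unfolding Pol_def is_pol_def ops_def by auto
  then show "z \<in> Feas \<gamma>'"
    using assms(4) assms(5)[rule_format, of g] by (simp add: z Feas_def)
qed

lemma non_polymorphism_table_excluded:
  assumes "1 \<le> k" "length z = CARD('d) ^ k" "z \<notin> feasible_tables k"
  shows "\<exists>\<gamma>'\<in>\<Gamma>. fst \<gamma>' = CARD('d) ^ k \<and> feasible_tables k \<subseteq> Feas \<gamma>' \<and> z \<notin> Feas \<gamma>'"
proof -
  obtain g where g: "g \<in> ops k" "op_table k g = z"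
    using op_table_surj[OF assms(2)] by blast
  with assms(1,3) have "g \<in> all_ops - Pol \<Gamma>"
    by (auto simp: feasible_tables_def all_ops_def)
  then obtain \<gamma> where "\<gamma> \<in> \<Gamma>" "\<not> is_pol g \<gamma>"
    unfolding Pol_def by blast
  moreover have "fst g = k"
    using g(1) by (auto simp: ops_def)
  ultimately obtain ys where ys: "length ys = k" "set ys \<subseteq> Feas \<gamma>" "app_op g (fst \<gamma>) ys \<notin> Feas \<gamma>"
    unfolding is_pol_def by auto
  have "\<forall>y\<in>set ys. length y = fst \<gamma>"
    using ys(2) by (auto simp: Feas_def)
  then obtain \<gamma>' where \<gamma>': "\<gamma>' \<in> \<Gamma>" "fst \<gamma>' = CARD('d) ^ k"
    "\<forall>g. snd \<gamma>' (op_table k g) = snd \<gamma> (app_op g (fst \<gamma>) ys)"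
    using pullback_in[OF \<open>\<gamma> \<in> \<Gamma>\<close> ys(1)] by blast
  have "snd \<gamma> (app_op g (fst \<gamma>) ys) = \<infinity>"
    using value_infinite_if_not_Feas[OF _ ys(3)] by (simp add: app_op_def)
  then have "z \<notin> Feas \<gamma>'"
    using \<gamma>'(3)[rule_format, of g] g(2) by (simp add: Feas_def)
  with \<gamma>' show ?thesis
    using feasible_tables_subset_Feas_pullback[OF \<open>\<gamma> \<in> \<Gamma>\<close> ys(1,2) \<gamma>'(2,3)] by blast
qed

lemma feasible_tables_relation_in:
  assumes "1 \<le> k"
  shows "\<exists>\<delta>\<in>\<Gamma>. fst \<delta> = CARD('d) ^ k \<and> Feas \<delta> = feasible_tables k"
proof -
  let ?A = "{z. length z = CARD('d) ^ k} - feasible_tables k"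
  have "\<exists>\<delta>\<in>\<Gamma>. fst \<delta> = CARD('d) ^ k \<and> feasible_tables k \<subseteq> Feas \<delta> \<and> ?A \<inter> Feas \<delta> = {}"
  proof (rule intersection_avoiding_in)
    show "finite ?A"
      using finite_lists_of_length by blast
    show "\<forall>z\<in>feasible_tables k. length z = CARD('d) ^ k"
      using length_feasible_tables by blast
    show "\<exists>\<gamma>\<in>\<Gamma>. fst \<gamma> = CARD('d) ^ k \<and> feasible_tables k \<subseteq> Feas \<gamma> \<and> z \<notin> Feas \<gamma>"
      if "z \<in> ?A" for z
      using non_polymorphism_table_excluded[OF assms] that by blast
  qed simp
  then obtain \<delta> where \<delta>: "\<delta> \<in> \<Gamma>" "fst \<delta> = CARD('d) ^ k" "feasible_tables k \<subseteq> Feas \<delta>"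
    "?A \<inter> Feas \<delta> = {}"
    by blast
  then have "Feas \<delta> \<subseteq> feasible_tables k"
    by (auto simp: Feas_def)
  with \<delta> show ?thesis
    by blast
qed

section \<open>The cone of relations on feasible tables\<close>

definition table_relations :: "nat \<Rightarrow> 'd wrel set" where
  "table_relations k = {\<gamma> \<in> \<Gamma>. fst \<gamma> = CARD('d) ^ k \<and> Feas \<gamma> = feasible_tables k}"

definition table_cone :: "nat \<Rightarrow> ('d list \<Rightarrow> real) set" where
  "table_cone k = wcoords (feasible_tables k) ` table_relations k"

lemma wcoords_in_table_cone: "\<gamma> \<in> table_relations k \<Longrightarrow> wcoords (feasible_tables k) \<gamma> \<in> table_cone k"
  by (simp add: table_cone_def)

lemma closed_table_cone: "closed (table_cone k)"
  unfolding table_cone_def table_relations_def by (rule closed_coords)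

lemma table_cone_supported: "c \<in> table_cone k \<Longrightarrow> z \<notin> feasible_tables k \<Longrightarrow> c z = 0"
  by (auto simp: table_cone_def wcoords_def)

lemma table_relation_value:
  "\<gamma> \<in> table_relations k \<Longrightarrow> z \<in> feasible_tables k \<Longrightarrow>
    snd \<gamma> z = ereal (wcoords (feasible_tables k) \<gamma> z)"
  using Feas_value_real[of \<gamma> z] by (simp add: table_relations_def wcoords_def)

lemma table_cone_add:
  assumes "c \<in> table_cone k" "d \<in> table_cone k"
  shows "(\<lambda>z. c z + d z) \<in> table_cone k"
proof -
  obtain \<gamma>1 \<gamma>2 where \<gamma>: "\<gamma>1 \<in> table_relations k" "\<gamma>2 \<in> table_relations k"
    and c: "c = wcoords (feasible_tables k) \<gamma>1" and d: "d = wcoords (feasible_tables k) \<gamma>2"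
    using assms by (auto simp: table_cone_def)
  then have mem: "wsum \<gamma>1 \<gamma>2 \<in> table_relations k"
    by (auto simp: table_relations_def wsum_in Feas_wsum)
  have eq: "wcoords (feasible_tables k) (wsum \<gamma>1 \<gamma>2) = (\<lambda>z. c z + d z)"
  proof
    fix z
    show "wcoords (feasible_tables k) (wsum \<gamma>1 \<gamma>2) z = c z + d z"
    proof (cases "z \<in> feasible_tables k")
      case True
      then have "snd (wsum \<gamma>1 \<gamma>2) z = ereal (c z + d z)"
        using \<gamma> table_relation_value[OF \<gamma>(1) True] table_relation_value[OF \<gamma>(2) True]
          length_feasible_tables[OF True] by (simp add: c d snd_wsum table_relations_def)
      with True show ?thesis
        by (simp add: wcoords_def)
    qed (simp add: c d wcoords_def)
  qed
  show ?thesis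
    using wcoords_in_table_cone[OF mem] by (simp only: eq)
qed

lemma table_cone_scale:
  assumes "c \<in> table_cone k" "0 \<le> t"
  shows "(\<lambda>z. t * c z) \<in> table_cone k"
proof -
  obtain \<gamma> where \<gamma>: "\<gamma> \<in> table_relations k" and c: "c = wcoords (feasible_tables k) \<gamma>"
    using assms by (auto simp: table_cone_def)
  then have mem: "wscale t \<gamma> \<in> table_relations k"
    using assms(2) by (auto simp: table_relations_def wscale_in Feas_wscale)
  have eq: "wcoords (feasible_tables k) (wscale t \<gamma>) = (\<lambda>z. t * c z)"
    using table_relation_value[OF \<gamma>] by (auto simp: c wcoords_def wscale_def)
  show ?thesis
    using wcoords_in_table_cone[OF mem] by (simp only: eq)
qed

lemma zero_table_relation:
  assumes "1 \<le> k"
  shows "\<exists>Z\<in>table_relations k. \<forall>z\<in>feasible_tables k. snd Z z = 0"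
proof -
  obtain \<delta> where \<delta>: "\<delta> \<in> table_relations k"
    using feasible_tables_relation_in[OF assms] by (auto simp: table_relations_def)
  then have "wscale 0 \<delta> \<in> table_relations k"
    by (auto simp: table_relations_def wscale_in Feas_wscale)
  moreover have "snd (wscale 0 \<delta>) z = 0" if "z \<in> feasible_tables k" for z
    using table_relation_value[OF \<delta> that] by (simp add: wscale_def zero_ereal_def)
  ultimately show ?thesis
    by blast
qed

lemma table_cone_const:
  assumes "1 \<le> k"
  shows "(\<lambda>z. if z \<in> feasible_tables k then r else 0) \<in> table_cone k"
proof -
  obtain Z where Z: "Z \<in> table_relations k" "\<forall>z\<in>feasible_tables k. snd Z z = 0"
    using zero_table_relation[OF assms] by blast
  then have mem: "wconst r Z \<in> table_relations k"
    by (auto simp: table_relations_def wconst_in Feas_wconst)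
  have eq: "wcoords (feasible_tables k) (wconst r Z) = (\<lambda>z. if z \<in> feasible_tables k then r else 0)"
    using Z(2) by (auto simp: wcoords_def wconst_def)
  show ?thesis
    using wcoords_in_table_cone[OF mem] by (simp only: eq)
qed

lemma pullback_in_table_cone:
  assumes "1 \<le> k" "\<gamma> \<in> \<Gamma>" "length ys = k" "set ys \<subseteq> Feas \<gamma>"
  shows "\<exists>c\<in>table_cone k. \<forall>g\<in>Pol \<Gamma> \<inter> ops k.
           c (op_table k g) = real_of_ereal (snd \<gamma> (app_op g (fst \<gamma>) ys))"
proof -
  have "\<forall>y\<in>set ys. length y = fst \<gamma>"
    using assms(4) by (auto simp: Feas_def)
  then obtain \<gamma>' where \<gamma>': "\<gamma>' \<in> \<Gamma>" "fst \<gamma>' = CARD('d) ^ k"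
    "\<forall>g. snd \<gamma>' (op_table k g) = snd \<gamma> (app_op g (fst \<gamma>) ys)"
    using pullback_in[OF assms(2,3)] by blast
  have F: "feasible_tables k \<subseteq> Feas \<gamma>'"
    using feasible_tables_subset_Feas_pullback[OF assms(2-4) \<gamma>'(2,3)] .
  obtain Z where Z: "Z \<in> table_relations k" "\<forall>z\<in>feasible_tables k. snd Z z = 0"
    using zero_table_relation[OF assms(1)] by blast
  \<comment> \<open>Adding Z cuts the feasibility set of the pullback down to exactly the feasible tables.\<close>
  have mem: "wsum \<gamma>' Z \<in> table_relations k"
    using \<gamma>' Z F by (auto simp: table_relations_def wsum_in Feas_wsum)
  have "wcoords (feasible_tables k) (wsum \<gamma>' Z) (op_table k g) = real_of_ereal (snd \<gamma> (app_op g (fst \<gamma>) ys))"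
    if "g \<in> Pol \<Gamma> \<inter> ops k" for g
  proof -
    have "op_table k g \<in> feasible_tables k"
      using that by (simp add: feasible_tables_def)
    then show ?thesis
      using \<gamma>'(3)[rule_format, of g] \<gamma>'(2) Z
      by (simp add: wcoords_def snd_wsum table_relations_def)
  qed
  then show ?thesis
    using wcoords_in_table_cone[OF mem] by blast
qed

lemma proj_tables_subset_feasible_tables: "op_table k ` projs k \<subseteq> feasible_tables k"
  unfolding feasible_tables_def by (intro image_mono) (auto simp: projs_def proj_in_Pol proj_in_ops)

text \<open>The columns of table_rows k enumerate D^k, so a polymorphism of Opt \<gamma> maps these rows
  to its own table.\<close>
lemma feasible_tables_subset_Feas_Opt:
  assumes "\<gamma> \<in> table_relations k" "op_table k ` projs k \<subseteq> Feas (Opt \<gamma>)"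
  shows "feasible_tables k \<subseteq> Feas (Opt \<gamma>)"
proof
  fix z
  assume "z \<in> feasible_tables k"
  then obtain g where g: "g \<in> Pol \<Gamma>" "g \<in> ops k" and z: "z = op_table k g"
    by (auto simp: feasible_tables_def)
  have "\<gamma> \<in> \<Gamma>" "fst \<gamma> = CARD('d) ^ k"
    using assms(1) by (simp_all add: table_relations_def)
  moreover have "is_pol g (Opt \<gamma>)" "fst g = k"
    using g Opt_in[OF \<open>\<gamma> \<in> \<Gamma>\<close>] by (auto simp: Pol_def ops_def)
  ultimately have "app_op g (CARD('d) ^ k) (table_rows k) \<in> Feas (Opt \<gamma>)"
    using assms(2) by (auto simp: is_pol_def table_rows_def set_table_rows[symmetric])
  then show "z \<in> Feas (Opt \<gamma>)"
    by (simp add: app_op_table_rows z)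
qed

lemma table_cone_meets_K_trivially:
  assumes "1 \<le> k" "c \<in> table_cone k" "\<forall>j\<in>op_table k ` projs k. c j = 0"
    and nonneg: "\<forall>z\<in>feasible_tables k. 0 \<le> c z"
  shows "\<forall>z\<in>feasible_tables k. c z = 0"
proof
  fix z
  assume z: "z \<in> feasible_tables k"
  obtain \<gamma> where \<gamma>: "\<gamma> \<in> table_relations k" and c: "c = wcoords (feasible_tables k) \<gamma>"
    using assms(2) by (auto simp: table_cone_def)
  then have fst_\<gamma>: "fst \<gamma> = CARD('d) ^ k" and Feas_\<gamma>: "Feas \<gamma> = feasible_tables k"
    by (simp_all add: table_relations_def)
  have coords: "snd \<gamma> x = ereal (c x)" if "x \<in> feasible_tables k" for x
    using table_relation_value[OF \<gamma> that] by (simp add: c)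
  have nonneg_\<gamma>: "0 \<le> snd \<gamma> y" if "length y = fst \<gamma>" for y
    using nonneg coords value_infinite_if_not_Feas[OF that] Feas_\<gamma>
    by (cases "y \<in> feasible_tables k") auto
  have proj_value: "x \<in> Feas \<gamma> \<and> snd \<gamma> x = 0" if "x \<in> op_table k ` projs k" for x
  proof -
    have "x \<in> feasible_tables k"
      using that proj_tables_subset_feasible_tables by blast
    with that assms(3) show ?thesis
      using coords Feas_\<gamma> by (auto simp: zero_ereal_def)
  qed
  then have "op_table k ` projs k \<subseteq> Feas (Opt \<gamma>)"
    using nonneg_\<gamma> by (auto simp: Feas_Opt)
  with z have "snd \<gamma> z \<le> snd \<gamma> (op_table k (proj k 0))"
    using feasible_tables_subset_Feas_Opt[OF \<gamma>] by (auto simp: Feas_Opt fst_\<gamma>)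
  also have "\<dots> = 0"
    using assms(1) by (intro proj_value[THEN conjunct2] imageI) (auto simp: projs_def)
  finally show "c z = 0"
    using nonneg coords z by (simp add: zero_ereal_def antisym)
qed

lemma finite_feasible_tables: "finite (feasible_tables k)"
  by (rule finite_subset[OF _ finite_lists_of_length[of "CARD('d) ^ k"]])
    (auto dest: length_feasible_tables)

section \<open>Weighted polymorphisms from separating weights\<close>

definition table_separator :: "nat \<Rightarrow> ('d list \<Rightarrow> real) \<Rightarrow> bool" where
  "table_separator k w \<longleftrightarrow>
     (\<forall>c\<in>table_cone k. (\<Sum>z\<in>feasible_tables k. w z * c z) \<le> 0) \<and>
     (\<forall>z\<in>feasible_tables k - op_table k ` projs k. 0 \<le> w z)"

lemma table_separator_le:
  "table_separator k w \<Longrightarrow> c \<in> table_cone k \<Longrightarrow> (\<Sum>z\<in>feasible_tables k. w z * c z) \<le> 0"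
  by (simp add: table_separator_def)

lemma table_separator_exists:
  assumes "1 \<le> k" "f \<in> Pol \<Gamma>" "f \<in> ops k" "f \<notin> projs k"
  shows "\<exists>w. table_separator k w \<and> 0 < w (op_table k f)"
proof -
  interpret cone_separation "feasible_tables k" "op_table k ` projs k" "op_table k f" "table_cone k"
  proof
    show "finite (feasible_tables k)"
      by (rule finite_feasible_tables)
    show "op_table k f \<in> feasible_tables k"
      using assms(2,3) by (simp add: feasible_tables_def)
    show "op_table k f \<notin> op_table k ` projs k"
      using op_table_in_proj_tables_iff[OF assms(3)] assms(4) by blast
    show "op_table k ` projs k \<subseteq> feasible_tables k"
      by (rule proj_tables_subset_feasible_tables)
    show "(\<lambda>z. 0) \<in> table_cone k"
      using table_cone_const[OF assms(1), of 0] by simp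
    show "closed (table_cone k)"
      by (rule closed_table_cone)
    show "c z = 0" if "c \<in> table_cone k" "z \<notin> feasible_tables k" for c z
      using that by (rule table_cone_supported)
    show "(\<lambda>z. c z + d z) \<in> table_cone k" if "c \<in> table_cone k" "d \<in> table_cone k" for c d
      using that by (rule table_cone_add)
    show "(\<lambda>z. t * c z) \<in> table_cone k" if "c \<in> table_cone k" "0 \<le> t" for c t
      using that by (rule table_cone_scale)
    show "\<forall>z\<in>feasible_tables k. c z = 0"
      if "c \<in> table_cone k" "\<forall>j\<in>op_table k ` projs k. c j = 0" "\<forall>z\<in>feasible_tables k. 0 \<le> c z"
      for c
      using assms(1) that by (rule table_cone_meets_K_trivially)
  qed
  show ?thesis
    using separating_weight by (auto simp: table_separator_def)
qed

definition weighting_of :: "nat \<Rightarrow> ('d list \<Rightarrow> real) \<Rightarrow> 'd weighting" where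
  "weighting_of k w = (k, \<lambda>g. if g \<in> Pol \<Gamma> \<inter> ops k then w (op_table k g) else 0)"

lemma sum_weighting_of:
  "(\<Sum>g\<in>ops k. snd (weighting_of k w) g * c (op_table k g)) = (\<Sum>z\<in>feasible_tables k. w z * c z)"
proof -
  have "(\<Sum>g\<in>ops k. snd (weighting_of k w) g * c (op_table k g))
      = (\<Sum>g\<in>Pol \<Gamma> \<inter> ops k. w (op_table k g) * c (op_table k g))"
    by (rule sum.mono_neutral_cong_right) (auto simp: weighting_of_def finite_ops)
  also have "\<dots> = (\<Sum>z\<in>feasible_tables k. w z * c z)"
    unfolding feasible_tables_def
    by (rule sum.reindex_cong[symmetric, OF inj_on_subset[OF inj_on_op_table]]) auto
  finally show ?thesis .
qed

lemma wsupp_weighting_of_subset: "wsupp (weighting_of k w) \<subseteq> Pol \<Gamma> \<inter> ops k"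
  using proj_in_Pol proj_in_ops
  by (auto simp: wsupp_def weighting_of_def projs_def split: if_splits)

lemma is_weighting_weighting_of:
  assumes "1 \<le> k" "table_separator k w"
  shows "is_weighting (weighting_of k w)"
proof -
  have "r * (\<Sum>z\<in>feasible_tables k. w z) \<le> 0" for r
  proof -
    have "(\<Sum>z\<in>feasible_tables k. w z * (if z \<in> feasible_tables k then r else 0)) \<le> 0"
      using table_separator_le[OF assms(2) table_cone_const[OF assms(1)]] .
    then show ?thesis
      by (simp add: sum_distrib_left mult.commute)
  qed
  from this[of 1] this[of "-1"] have "(\<Sum>z\<in>feasible_tables k. w z) = 0"
    by simp
  then have "(\<Sum>g\<in>ops k. snd (weighting_of k w) g) = 0"
    using sum_weighting_of[of k w "\<lambda>_. 1"] by simp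
  moreover have "g \<in> projs k" if "g \<in> ops k" "snd (weighting_of k w) g < 0" for g
  proof -
    have "g \<in> Pol \<Gamma>" "w (op_table k g) < 0"
      using that by (auto simp: weighting_of_def split: if_splits)
    moreover have "op_table k g \<in> feasible_tables k"
      using \<open>g \<in> Pol \<Gamma>\<close> that(1) by (simp add: feasible_tables_def)
    ultimately have "op_table k g \<in> op_table k ` projs k"
      using assms(2) unfolding table_separator_def by (meson DiffI not_le)
    with that(1) show ?thesis
      by (simp add: op_table_in_proj_tables_iff)
  qed
  ultimately show ?thesis
    using assms(1) by (auto simp: is_weighting_def weighting_of_def)
qed

lemma is_wpol_weighting_of:
  assumes "1 \<le> k" "table_separator k w" "\<gamma> \<in> \<Gamma>"
  shows "is_wpol (weighting_of k w) \<gamma>"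
  unfolding is_wpol_def
proof (intro conjI ballI allI impI)
  let ?\<omega> = "weighting_of k w"
  show "is_weighting ?\<omega>"
    using assms(1,2) by (rule is_weighting_weighting_of)
  show "is_pol g \<gamma>" if "g \<in> wsupp ?\<omega>" for g
    using that wsupp_weighting_of_subset assms(3) by (auto simp: Pol_def)
  fix ys
  assume "length ys = fst ?\<omega> \<and> set ys \<subseteq> Feas \<gamma>"
  then have ys: "length ys = k" "set ys \<subseteq> Feas \<gamma>"
    by (simp_all add: weighting_of_def)
  obtain c where "c \<in> table_cone k"
    and c: "\<forall>g\<in>Pol \<Gamma> \<inter> ops k. c (op_table k g) = real_of_ereal (snd \<gamma> (app_op g (fst \<gamma>) ys))"
    using pullback_in_table_cone[OF assms(1,3) ys] by blast
  have "(\<Sum>g\<in>wsupp ?\<omega>. snd ?\<omega> g * real_of_ereal (snd \<gamma> (app_op g (fst \<gamma>) ys)))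
      = (\<Sum>g\<in>ops k. snd ?\<omega> g * real_of_ereal (snd \<gamma> (app_op g (fst \<gamma>) ys)))"
    using sum_wsupp_eq_sum_ops[OF \<open>is_weighting ?\<omega>\<close>] by (simp add: weighting_of_def)
  also have "\<dots> = (\<Sum>g\<in>ops k. snd ?\<omega> g * c (op_table k g))"
    using c by (intro sum.cong) (auto simp: weighting_of_def)
  also have "\<dots> = (\<Sum>z\<in>feasible_tables k. w z * c z)"
    by (rule sum_weighting_of)
  also have "\<dots> \<le> 0"
    using assms(2) \<open>c \<in> table_cone k\<close> by (rule table_separator_le)
  finally show "(\<Sum>g\<in>wsupp ?\<omega>. snd ?\<omega> g * real_of_ereal (snd \<gamma> (app_op g (fst \<gamma>) ys))) \<le> 0" .
qed

lemma Pol_subset_supp_set_wPol: "Pol \<Gamma> \<subseteq> supp_set (wPol \<Gamma>)"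
proof
  fix f
  assume f: "f \<in> Pol \<Gamma>"
  show "f \<in> supp_set (wPol \<Gamma>)"
  proof (cases "f \<in> all_projs")
    case False
    from f obtain k where k: "1 \<le> k" "f \<in> ops k"
      by (auto simp: Pol_def all_ops_def)
    with False have "f \<notin> projs k"
      by (auto simp: all_projs_def)
    then obtain w where w: "table_separator k w" "0 < w (op_table k f)"
      using table_separator_exists[OF k(1) f k(2)] by blast
    then have "weighting_of k w \<in> wPol \<Gamma>"
      using k(1) is_weighting_weighting_of is_wpol_weighting_of by (simp add: wPol_def)
    moreover have "f \<in> wsupp (weighting_of k w)"
      using f k(2) w(2) by (simp add: wsupp_def weighting_of_def)
    ultimately show ?thesis
      by (auto simp: supp_set_def)
  qed (simp add: supp_set_def)
qed

end

theorem corollary1: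
  fixes \<Gamma> :: "('d::finite) wrel set"
  assumes "CARD('d) \<ge> 2"
    and "weighted_relational_clone \<Gamma>"
  shows "supp_set (wPol \<Gamma>) = Pol \<Gamma>"
proof -
  interpret weighted_clone \<Gamma>
    using assms(2) by unfold_locales
  show ?thesis
    using supp_set_wPol_subset_Pol Pol_subset_supp_set_wPol by blast
qed

end
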